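(* For the decoupled single-device problem with parameters $\varphi>0$, $p\in(0,1)$, let $\Gamma(c)$ be the optimal threshold for sampling cost $c\ge0$ and let the passive set be $\mathcal{Q}(c)=\{n\in\mathbb{Z}:0\le n<\Gamma(c)\}$. Then $\Gamma(c)$ is nondecreasing in $c$; equivalently, for all $0\le c_1<c_2$, $\mathcal{Q}(c_1)\subseteq\mathcal{Q}(c_2)$. That is, the decoupled problem is indexable (and hence so is the $M$-device flow-sampling problem, each of whose devices yields such a decoupled problem).
   Context: Decoupled single-device problem: a Markov decision process with state space $\{0,1,2,\dots\}$ (a counter $n$) and action set $\{0,1\}$ ($0$ = rest, $1$ = sample). Transitions: from state $n$ under action $1$ go to state $0$ with probability $1$; under action $0$ go to state $0$ with probability $p$ and to state $n+1$ with probability $1-p$. Immediate cost: $C(n,1)=c+\varphi n$ and $C(n,0)=\varphi n$, where $c\ge0$ is a fixed sampling cost. The objective is to minimize the long-run average cost. The average-cost optimal policy is a threshold policy: for each $c$ there is an integer $\Gamma(c)\ge0$ such that it is optimal to rest in states $n<\Gamma(c)$ and to sample in states $n\ge\Gamma(c)$. A problem is called indexable if the passive set (set of states where resting is optimal) is monotone nondecreasing in the sampling cost $c$. *)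

theory Defs
  imports "HOL-Probability.Probability"
begin

text \<open>Decoupled single-device MDP. States: nat (the counter n). Actions: nat, where
  0 = rest and 1 = sample (admissible actions are 0 and 1).\<close>

definition trans :: "real \<Rightarrow> nat \<Rightarrow> nat \<Rightarrow> nat pmf" where
  "trans p a n = (if a = 1 then return_pmf 0
                  else map_pmf (\<lambda>b. if b then 0 else Suc n) (bernoulli_pmf p))"

definition cost :: "real \<Rightarrow> real \<Rightarrow> nat \<Rightarrow> nat \<Rightarrow> real" where
  "cost c \<phi> n a = (if a = 1 then c + \<phi> * real n else \<phi> * real n)"

primrec state_dist :: "real \<Rightarrow> (nat \<Rightarrow> nat) \<Rightarrow> nat \<Rightarrow> nat \<Rightarrow> nat pmf" where
  "state_dist p f s 0 = return_pmf s"
| "state_dist p f s (Suc t) = bind_pmf (state_dist p f s t) (\<lambda>n. trans p (f n) n)"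

definition avg_cost :: "real \<Rightarrow> real \<Rightarrow> real \<Rightarrow> (nat \<Rightarrow> nat) \<Rightarrow> nat \<Rightarrow> ereal" where
  "avg_cost p \<phi> c f s =
     limsup (\<lambda>T. ereal ((\<Sum>t<T. measure_pmf.expectation (state_dist p f s t)
                                     (\<lambda>n. cost c \<phi> n (f n))) / real T))"

definition admissible :: "(nat \<Rightarrow> nat) \<Rightarrow> bool" where
  "admissible f \<longleftrightarrow> (\<forall>n. f n \<in> {0, 1})"

definition threshold_policy :: "nat \<Rightarrow> nat \<Rightarrow> nat" where
  "threshold_policy \<Gamma> n = (if n < \<Gamma> then 0 else 1)"

definition optimal_threshold :: "real \<Rightarrow> real \<Rightarrow> real \<Rightarrow> nat \<Rightarrow> bool" where
  "optimal_threshold p \<phi> c \<Gamma> \<longleftrightarrow>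
     (\<forall>f s. admissible f \<longrightarrow> avg_cost p \<phi> c (threshold_policy \<Gamma>) s \<le> avg_cost p \<phi> c f s)"

definition passive_set :: "nat \<Rightarrow> nat set" where
  "passive_set \<Gamma> = {n. n < \<Gamma>}"

end

theory Submission imports Defs begin

text \<open>\<open>climb_time p n\<close> is the expected time for the counter to climb from 0 to \<open>n\<close> when
  every rest step resets it with probability \<open>p\<close>, and \<open>cycle_length p G\<close> adds the sampling
  step. Under the threshold policy with threshold \<open>G\<close> started at 0, the potential
  \<open>climb_time p (min n G)\<close> rises by exactly 1 in expectation at every resting step and falls
  by \<open>cycle_length p G\<close> at every sampling step. Telescoping shows that the long-run sampling
  frequency is \<open>1 / cycle_length p G\<close>, so the average cost is affine in \<open>c\<close> with that
  slope. Comparing the optimality inequalities for \<open>c1 < c2\<close> forces the slope at the larger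
  cost to be smaller, i.e. the cycle length, which is strictly increasing in the threshold, to be
  larger.\<close>

lemma slope_le_of_optimal_comparison:
  fixes c1 c2 x1 x2 r1 r2 :: real
  assumes "c1 < c2" "c1 * x1 + r1 \<le> c1 * x2 + r2" "c2 * x2 + r2 \<le> c2 * x1 + r1"
  shows "x2 \<le> x1"
proof -
  have "(c2 - c1) * (x2 - x1) \<le> 0"
    using assms(2,3) by (simp add: algebra_simps)
  then show ?thesis using assms(1) by (simp add: mult_le_0_iff)
qed

lemma limsup_ereal_bounded:
  fixes f :: "nat \<Rightarrow> real"
  assumes "\<And>n. a \<le> f n" "\<And>n. f n \<le> b"
  shows "\<exists>r. limsup (\<lambda>n. ereal (f n)) = ereal r"
proof -
  have "ereal a \<le> limsup (\<lambda>n. ereal (f n))" "limsup (\<lambda>n. ereal (f n)) \<le> ereal b"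
    using Limsup_mono[of "\<lambda>_. ereal a" "\<lambda>n. ereal (f n)" sequentially]
          Limsup_mono[of "\<lambda>n. ereal (f n)" "\<lambda>_. ereal b" sequentially] assms
    by (auto simp: Limsup_const)
  then show ?thesis by (cases "limsup (\<lambda>n. ereal (f n))") auto
qed

lemma bounded_over_n_tendsto_zero:
  fixes f :: "nat \<Rightarrow> real"
  assumes "\<And>n. 0 \<le> f n" "\<And>n. f n \<le> B"
  shows "(\<lambda>n. f n / real n) \<longlonglongrightarrow> 0"
proof (rule tendsto_sandwich[of "\<lambda>_. 0" _ _ "\<lambda>n. B / real n"])
  show "\<forall>\<^sub>F n in sequentially. 0 \<le> f n / real n" "\<forall>\<^sub>F n in sequentially. f n / real n \<le> B / real n"
    using assms by (auto intro!: always_eventually divide_right_mono)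
qed (rule tendsto_const, rule lim_const_over_n)

definition climb_time :: "real \<Rightarrow> nat \<Rightarrow> real" where
  "climb_time p n = (\<Sum>j\<in>{1..n}. (1/(1-p))^j)"

lemma climb_time_Suc: "climb_time p (Suc n) = climb_time p n + (1/(1-p)) ^ Suc n"
  by (simp add: climb_time_def)

lemma climb_time_rec:
  assumes "p < 1"
  shows "(1-p) * climb_time p (Suc n) = 1 + climb_time p n"
proof (induction n)
  case 0
  then show ?case using assms by (simp add: climb_time_def)
next
  case (Suc n)
  have "(1-p) * (1/(1-p)) ^ Suc (Suc n) = (1/(1-p)) ^ Suc n"
    using assms by simp
  with Suc show ?case by (simp add: climb_time_Suc distrib_left)
qed

lemma climb_time_nonneg: "p < 1 \<Longrightarrow> 0 \<le> climb_time p n"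
  by (simp add: climb_time_def sum_nonneg)

lemma strict_mono_climb_time:
  assumes "p < 1"
  shows "strict_mono (climb_time p)"
  using assms by (auto simp: strict_mono_Suc_iff climb_time_Suc)

definition cycle_length :: "real \<Rightarrow> nat \<Rightarrow> real" where
  "cycle_length p G = 1 + climb_time p G"

lemma cycle_length_pos: "p < 1 \<Longrightarrow> 0 < cycle_length p G"
  using climb_time_nonneg[of p G] by (simp add: cycle_length_def)

abbreviation expect :: "real \<Rightarrow> nat \<Rightarrow> nat \<Rightarrow> (nat \<Rightarrow> real) \<Rightarrow> real" where
  "expect p G t g \<equiv> measure_pmf.expectation (state_dist p (threshold_policy G) 0 t) g"

lemma set_pmf_trans_threshold: "set_pmf (trans p (threshold_policy G n) n) \<subseteq> {..G}"
  by (auto simp: trans_def threshold_policy_def)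

lemma set_pmf_state_dist_threshold: "set_pmf (state_dist p (threshold_policy G) 0 t) \<subseteq> {..G}"
  by (induction t) (use set_pmf_trans_threshold[of p G] in \<open>auto simp: set_bind_pmf\<close>)

lemma integrable_state_dist_threshold:
  "integrable (measure_pmf (state_dist p (threshold_policy G) 0 t)) (g :: nat \<Rightarrow> real)"
  by (rule integrable_measure_pmf_finite)
     (use set_pmf_state_dist_threshold[of p G t] in \<open>auto intro: finite_subset\<close>)

lemma expect_Suc:
  "expect p G (Suc t) g = expect p G t (\<lambda>n. measure_pmf.expectation (trans p (threshold_policy G n) n) g)"
proof -
  have "expect p G (Suc t) g =
    (\<Sum>n\<le>G. pmf (state_dist p (threshold_policy G) 0 t) n *
       measure_pmf.expectation (trans p (threshold_policy G n) n) g)"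
    using set_pmf_state_dist_threshold
    by (simp only: state_dist.simps, subst pmf_expectation_bind[of "{..G}"])
       (auto intro: finite_subset[OF set_pmf_trans_threshold])
  also have "\<dots> = expect p G t (\<lambda>n. measure_pmf.expectation (trans p (threshold_policy G n) n) g)"
    using set_pmf_state_dist_threshold by (subst integral_measure_pmf[of "{..G}"]) auto
  finally show ?thesis .
qed

declare state_dist.simps(2) [simp del]

definition potential :: "real \<Rightarrow> nat \<Rightarrow> nat \<Rightarrow> real" where
  "potential p G n = climb_time p (min n G)"

lemma potential_bounds:
  assumes "p < 1"
  shows "0 \<le> potential p G n" "potential p G n \<le> climb_time p G"
  using climb_time_nonneg[OF assms] strict_mono_less_eq[OF strict_mono_climb_time[OF assms]]
  by (auto simp: potential_def)

lemma expectation_trans_potential: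
  assumes "0 \<le> p" "p < 1"
  shows "measure_pmf.expectation (trans p (threshold_policy G n) n) (potential p G)
           = potential p G n + 1 - cycle_length p G * threshold_policy G n"
proof (cases "n < G")
  case True
  then have "measure_pmf.expectation (trans p (threshold_policy G n) n) (potential p G)
               = (1-p) * climb_time p (Suc n)"
    using assms by (simp add: trans_def threshold_policy_def potential_def climb_time_def min_def)
  with True show ?thesis
    using climb_time_rec[OF assms(2)] by (simp add: potential_def threshold_policy_def)
next
  case False
  then show ?thesis
    by (simp add: trans_def threshold_policy_def potential_def climb_time_def cycle_length_def min_def)
qed

lemma expect_potential_Suc:
  assumes "0 \<le> p" "p < 1"
  shows "expect p G (Suc t) (potential p G)
           = expect p G t (potential p G) + 1 - cycle_length p G * expect p G t (threshold_policy G)"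
  by (simp add: expect_Suc expectation_trans_potential[OF assms] integrable_state_dist_threshold)

lemma sum_expect_sampling:
  assumes "0 \<le> p" "p < 1"
  shows "cycle_length p G * (\<Sum>t<T. expect p G t (threshold_policy G))
           = real T - expect p G T (potential p G)"
proof (induction T)
  case 0
  then show ?case by (simp add: potential_def climb_time_def)
next
  case (Suc T)
  then show ?case by (simp add: expect_potential_Suc[OF assms] algebra_simps)
qed

lemma sampling_frequency_limit:
  assumes "0 \<le> p" "p < 1"
  shows "(\<lambda>T. (\<Sum>t<T. expect p G t (threshold_policy G)) / real T) \<longlonglongrightarrow> 1 / cycle_length p G"
proof -
  let ?H = "cycle_length p G"
  have H: "0 < ?H" using cycle_length_pos[OF assms(2)] .
  have "(\<lambda>T. expect p G T (potential p G) / ?H / real T) \<longlonglongrightarrow> 0"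
    using potential_bounds[OF assms(2)] H
    by (intro bounded_over_n_tendsto_zero[where B = "climb_time p G / ?H"])
       (auto intro!: integral_nonneg_AE divide_right_mono
             simp: measure_pmf.integral_le_const integrable_state_dist_threshold)
  then have "(\<lambda>T. 1 / ?H - expect p G T (potential p G) / ?H / real T) \<longlonglongrightarrow> 1 / ?H - 0"
    by (intro tendsto_diff tendsto_const)
  moreover have "\<forall>\<^sub>F T in sequentially.
      1 / ?H - expect p G T (potential p G) / ?H / real T
        = (\<Sum>t<T. expect p G t (threshold_policy G)) / real T"
  proof (rule eventually_mono[OF eventually_gt_at_top[of 0]])
    fix T :: nat assume "0 < T"
    have sum: "(\<Sum>t<T. expect p G t (threshold_policy G)) = (real T - expect p G T (potential p G)) / ?H"
      using sum_expect_sampling[OF assms, of G T] H by (simp add: field_simps)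
    show "1 / ?H - expect p G T (potential p G) / ?H / real T
        = (\<Sum>t<T. expect p G t (threshold_policy G)) / real T"
      unfolding sum using H \<open>0 < T\<close> by (simp add: field_simps)
  qed
  ultimately show ?thesis by (simp add: tendsto_cong)
qed

lemma avg_cost_threshold_affine:
  assumes "0 \<le> p" "p < 1" "0 < \<phi>"
  shows "\<exists>r. \<forall>c. avg_cost p \<phi> c (threshold_policy G) 0 = ereal (c / cycle_length p G + r)"
proof -
  define holding where "holding T = (\<Sum>t<T. \<phi> * expect p G t real) / real T" for T
  define sampling where "sampling T = (\<Sum>t<T. expect p G t (threshold_policy G)) / real T" for T
  have "0 \<le> holding T \<and> holding T \<le> \<phi> * real G" for T
  proof -
    have "0 \<le> expect p G t real \<and> expect p G t real \<le> real G" for t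
      using set_pmf_state_dist_threshold[of p G t]
      by (auto intro!: integral_nonneg_AE measure_pmf.integral_le_const
               simp: AE_measure_pmf_iff integrable_state_dist_threshold)
    then have "0 \<le> (\<Sum>t<T. \<phi> * expect p G t real)" "(\<Sum>t<T. \<phi> * expect p G t real) \<le> real T * (\<phi> * real G)"
      using assms(3) sum_mono[of "{..<T}" "\<lambda>t. \<phi> * expect p G t real" "\<lambda>_. \<phi> * real G"]
      by (auto intro: sum_nonneg)
    then show ?thesis
      using assms(3) by (cases "T = 0") (auto simp: holding_def field_simps)
  qed
  then obtain r where r: "limsup (\<lambda>T. ereal (holding T)) = ereal r"
    using limsup_ereal_bounded[of 0 holding "\<phi> * real G"] by blast
  have "avg_cost p \<phi> c (threshold_policy G) 0 = ereal (c / cycle_length p G + r)" for c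
  proof -
    have cost: "measure_pmf.expectation (state_dist p (threshold_policy G) 0 t)
                  (\<lambda>n. cost c \<phi> n (threshold_policy G n))
                = \<phi> * expect p G t real + c * expect p G t (threshold_policy G)" for t
      by (subst Bochner_Integration.integral_cong[OF refl, where g = "\<lambda>n. \<phi> * real n + c * threshold_policy G n"])
         (auto simp: cost_def threshold_policy_def integrable_state_dist_threshold)
    have "avg_cost p \<phi> c (threshold_policy G) 0
            = limsup (\<lambda>T. ereal (c * sampling T) + ereal (holding T))"
      by (simp add: avg_cost_def cost holding_def sampling_def sum.distrib sum_distrib_left
                    add_divide_distrib add.commute)
    also have "\<dots> = ereal (c / cycle_length p G) + ereal r"
    proof -
      have "(\<lambda>T. c * sampling T) \<longlonglongrightarrow> c * (1 / cycle_length p G)"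
        unfolding sampling_def by (intro tendsto_mult tendsto_const sampling_frequency_limit assms)
      then have "(\<lambda>T. ereal (c * sampling T)) \<longlonglongrightarrow> ereal (c / cycle_length p G)"
        by simp
      from ereal_limsup_lim_add[OF this, of "\<lambda>T. ereal (holding T)"] show ?thesis
        using r by (simp del: plus_ereal.simps)
    qed
    finally show ?thesis by simp
  qed
  then show ?thesis by blast
qed

theorem lemma6:
  fixes \<phi> p c1 c2 :: real and \<Gamma>1 \<Gamma>2 :: nat
  assumes "\<phi> > 0" and "0 < p" and "p < 1"
    and "0 \<le> c1" and "c1 < c2"
    and "optimal_threshold p \<phi> c1 \<Gamma>1"
    and "optimal_threshold p \<phi> c2 \<Gamma>2"
  shows "\<Gamma>1 \<le> \<Gamma>2 \<and> passive_set \<Gamma>1 \<subseteq> passive_set \<Gamma>2"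
proof -
  obtain r1 r2 where
    r1: "\<And>c. avg_cost p \<phi> c (threshold_policy \<Gamma>1) 0 = ereal (c * (1 / cycle_length p \<Gamma>1) + r1)" and
    r2: "\<And>c. avg_cost p \<phi> c (threshold_policy \<Gamma>2) 0 = ereal (c * (1 / cycle_length p \<Gamma>2) + r2)"
    using avg_cost_threshold_affine[OF _ assms(3,1)] assms(2) by fastforce
  have "admissible (threshold_policy G)" for G
    by (simp add: admissible_def threshold_policy_def)
  then have "c1 * (1 / cycle_length p \<Gamma>1) + r1 \<le> c1 * (1 / cycle_length p \<Gamma>2) + r2"
    and "c2 * (1 / cycle_length p \<Gamma>2) + r2 \<le> c2 * (1 / cycle_length p \<Gamma>1) + r1"
    using assms(6,7) r1 r2 unfolding optimal_threshold_def by (metis ereal_less_eq(3))+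
  then have "1 / cycle_length p \<Gamma>2 \<le> 1 / cycle_length p \<Gamma>1"
    using slope_le_of_optimal_comparison[OF assms(5)] by blast
  then have "climb_time p \<Gamma>1 \<le> climb_time p \<Gamma>2"
    using cycle_length_pos[OF assms(3), of \<Gamma>1] cycle_length_pos[OF assms(3), of \<Gamma>2]
    by (simp add: cycle_length_def field_simps)
  then have "\<Gamma>1 \<le> \<Gamma>2"
    using strict_mono_less_eq[OF strict_mono_climb_time[OF assms(3)]] by blast
  then show ?thesis by (auto simp: passive_set_def)
qed

end
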